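(* Let $N\ge2$ and let $\phi:\mathbb{R}_{\ge0}\to\mathbb{R}$ be continuous. Then the DKPP $P_\phi(\cdot;\bm{L})$ is log-modular for every $N\times N$ positive semidefinite Hermitian matrix $\bm{L}$ if and only if $\phi$ is affine, i.e. $\phi(x)=bx+c$ for some $b,c\in\mathbb{R}$. (In particular, if $\phi$ is affine then $P_\phi(\cdot;\bm{L})$ is log-modular for every such $\bm{L}$.)
   Context: Let $\mathcal{Y}=\{1,\dots,N\}$. For $\mathcal{A}\subseteq\mathcal{Y}$, $\bm{L}[\mathcal{A}]=(L_{ij})_{i,j\in\mathcal{A}}$ denotes the principal submatrix. For a function $\phi$ and a Hermitian matrix $\bm{X}=\bm{U}\mathrm{diag}(\mu_1,\dots,\mu_k)\bm{U}^*$, $\phi(\bm{X})=\bm{U}\mathrm{diag}(\phi(\mu_1),\dots,\phi(\mu_k))\bm{U}^*$. Given a continuous $\phi:\mathbb{R}_{\ge0}\to\mathbb{R}$ and an $N\times N$ positive semidefinite Hermitian $\bm{L}$, the DKPP is $P_\phi(\mathcal{A};\bm{L})=\exp(\operatorname{tr}\phi(\bm{L}[\mathcal{A}]))/Z_\phi(\bm{L})$ with $Z_\phi(\bm{L})=\sum_{\mathcal{B}\subseteq\mathcal{Y}}\exp(\operatorname{tr}\phi(\bm{L}[\mathcal{B}]))$ and $\operatorname{tr}\phi$ of the empty matrix equal to $0$. A set function $f:2^{\mathcal{Y}}\to\mathbb{R}$ is modular if $f(\mathcal{S})+f(\mathcal{T})=f(\mathcal{S}\cup\mathcal{T})+f(\mathcal{S}\cap\mathcal{T})$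 for all $\mathcal{S},\mathcal{T}\subseteq\mathcal{Y}$; a positive function $P$ is log-modular if $\log P$ is modular. *)

theory Defs
  imports "HOL-Analysis.Analysis"
begin

text \<open>Matrices are represented as functions nat => nat => complex; a matrix
  indexed by a finite set A (e.g. A = {1..N} or a principal submatrix L[A])
  is such a function where only entries with both indices in A matter.\<close>

definition hermitian_on :: "nat set \<Rightarrow> (nat \<Rightarrow> nat \<Rightarrow> complex) \<Rightarrow> bool" where
  "hermitian_on A L \<longleftrightarrow> (\<forall>i\<in>A. \<forall>j\<in>A. L i j = cnj (L j i))"

definition psd_hermitian_on :: "nat set \<Rightarrow> (nat \<Rightarrow> nat \<Rightarrow> complex) \<Rightarrow> bool" where
  "psd_hermitian_on A L \<longleftrightarrow> hermitian_on A L \<and>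
     (\<forall>x :: nat \<Rightarrow> complex. Re (\<Sum>i\<in>A. \<Sum>j\<in>A. cnj (x i) * L i j * x j) \<ge> 0)"

definition unitary_on :: "nat set \<Rightarrow> (nat \<Rightarrow> nat \<Rightarrow> complex) \<Rightarrow> bool" where
  "unitary_on A U \<longleftrightarrow> (\<forall>i\<in>A. \<forall>j\<in>A. (\<Sum>k\<in>A. cnj (U k i) * U k j) = (if i = j then 1 else 0))"

definition spectral_decomp_on ::
  "nat set \<Rightarrow> (nat \<Rightarrow> nat \<Rightarrow> complex) \<Rightarrow> (nat \<Rightarrow> nat \<Rightarrow> complex) \<Rightarrow> (nat \<Rightarrow> real) \<Rightarrow> bool" where
  "spectral_decomp_on A X U mu \<longleftrightarrow> unitary_on A U \<and>
     (\<forall>i\<in>A. \<forall>j\<in>A. X i j = (\<Sum>k\<in>A. U i k * complex_of_real (mu k) * cnj (U j k)))"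

definition mat_fun_on ::
  "(real \<Rightarrow> real) \<Rightarrow> nat set \<Rightarrow> (nat \<Rightarrow> nat \<Rightarrow> complex) \<Rightarrow> (nat \<Rightarrow> nat \<Rightarrow> complex)" where
  "mat_fun_on phi A X = (SOME F. \<exists>U mu. spectral_decomp_on A X U mu \<and>
     (\<forall>i\<in>A. \<forall>j\<in>A. F i j = (\<Sum>k\<in>A. U i k * complex_of_real (phi (mu k)) * cnj (U j k))))"

text \<open>tr phi(L[A]); the trace of a Hermitian matrix is real. For A = {} it is 0.\<close>
definition tr_fun :: "(real \<Rightarrow> real) \<Rightarrow> (nat \<Rightarrow> nat \<Rightarrow> complex) \<Rightarrow> nat set \<Rightarrow> real" where
  "tr_fun phi L A = Re (\<Sum>i\<in>A. mat_fun_on phi A L i i)"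

definition Z_phi :: "(real \<Rightarrow> real) \<Rightarrow> nat \<Rightarrow> (nat \<Rightarrow> nat \<Rightarrow> complex) \<Rightarrow> real" where
  "Z_phi phi N L = (\<Sum>B\<in>Pow {1..N}. exp (tr_fun phi L B))"

definition dkpp :: "(real \<Rightarrow> real) \<Rightarrow> nat \<Rightarrow> (nat \<Rightarrow> nat \<Rightarrow> complex) \<Rightarrow> nat set \<Rightarrow> real" where
  "dkpp phi N L A = exp (tr_fun phi L A) / Z_phi phi N L"

definition modular_on :: "'a set \<Rightarrow> ('a set \<Rightarrow> real) \<Rightarrow> bool" where
  "modular_on Y f \<longleftrightarrow> (\<forall>S\<subseteq>Y. \<forall>T\<subseteq>Y. f S + f T = f (S \<union> T) + f (S \<inter> T))"

definition log_modular_on :: "'a set \<Rightarrow> ('a set \<Rightarrow> real) \<Rightarrow> bool" where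
  "log_modular_on Y P \<longleftrightarrow> (\<forall>S\<subseteq>Y. P S > 0) \<and> modular_on Y (\<lambda>S. ln (P S))"

end

theory Submission
  imports Defs "Jordan_Normal_Form.Spectral_Radius"
begin

text \<open>For affine \<open>phi x = b x + c\<close> on the nonnegative eigenvalues of a positive semidefinite
  matrix, \<open>tr phi(L[A]) = b tr L[A] + c |A|\<close>, which is modular in \<open>A\<close>; the partition function
  only contributes a constant to \<open>ln P\<close>. Conversely, for the rank-one matrix \<open>L = r r\<^sup>*\<close> with
  \<open>r = (\<surd>x, \<surd>y, 0, \<dots>)\<close>, the \<open>2 \<times> 2\<close> principal submatrix on \<open>{1,2}\<close> is singular with trace
  \<open>x + y\<close>, so its eigenvalues are \<open>0\<close> and \<open>x + y\<close>. Modularity at \<open>S = {1}\<close>, \<open>T = {2}\<close> then gives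
  \<open>phi x + phi y = phi (x + y) + phi 0\<close>, and a continuous solution of this Cauchy-type equation
  is affine.\<close>

section \<open>Matrices indexed by a finite set\<close>

type_synonym cmat = "nat \<Rightarrow> nat \<Rightarrow> complex"

definition mat_mult_on :: "nat set \<Rightarrow> cmat \<Rightarrow> cmat \<Rightarrow> cmat"
  where "mat_mult_on A X Y = (\<lambda>i j. \<Sum>k\<in>A. X i k * Y k j)"

definition mat_adj :: "cmat \<Rightarrow> cmat"
  where "mat_adj X = (\<lambda>i j. cnj (X j i))"

definition mat_one :: cmat
  where "mat_one = (\<lambda>i j. if i = j then 1 else 0)"

definition real_diag :: "(nat \<Rightarrow> real) \<Rightarrow> cmat"
  where "real_diag mu = (\<lambda>i j. if i = j then complex_of_real (mu i) else 0)"

definition mat_eq_on :: "nat set \<Rightarrow> cmat \<Rightarrow> cmat \<Rightarrow> bool"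
  where "mat_eq_on A X Y \<longleftrightarrow> (\<forall>i\<in>A. \<forall>j\<in>A. X i j = Y i j)"

lemma mat_mult_on_assoc: "mat_mult_on A (mat_mult_on A X Y) Z = mat_mult_on A X (mat_mult_on A Y Z)"
  unfolding mat_mult_on_def
  by (auto intro!: ext simp: sum_distrib_left sum_distrib_right mult.assoc intro: sum.swap)

lemma sum_mat_one_left:
  assumes "finite A" "i \<in> A" shows "(\<Sum>k\<in>A. mat_one i k * f k) = f i"
proof -
  have "(\<Sum>k\<in>A. mat_one i k * f k) = (\<Sum>k\<in>A. if i = k then f k else 0)"
    by (intro sum.cong) (auto simp: mat_one_def)
  with assms show ?thesis by simp
qed

lemma sum_mat_one_right:
  assumes "finite A" "j \<in> A" shows "(\<Sum>k\<in>A. f k * mat_one k j) = f j"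
proof -
  have "(\<Sum>k\<in>A. f k * mat_one k j) = (\<Sum>k\<in>A. if k = j then f k else 0)"
    by (intro sum.cong) (auto simp: mat_one_def)
  with assms show ?thesis by simp
qed

lemma mat_mult_on_one_left: "finite A \<Longrightarrow> i \<in> A \<Longrightarrow> mat_mult_on A mat_one X i j = X i j"
  unfolding mat_mult_on_def by (rule sum_mat_one_left)

lemma mat_mult_on_one_right: "finite A \<Longrightarrow> j \<in> A \<Longrightarrow> mat_mult_on A X mat_one i j = X i j"
  unfolding mat_mult_on_def by (rule sum_mat_one_right)

lemma mat_mult_on_real_diag:
  "finite A \<Longrightarrow> k \<in> A \<Longrightarrow> mat_mult_on A U (real_diag mu) i k = U i k * complex_of_real (mu k)"
  unfolding mat_mult_on_def real_diag_def by (simp add: if_distrib cong: if_cong)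

lemma mat_adj_mult_on: "mat_adj (mat_mult_on A X Y) = mat_mult_on A (mat_adj Y) (mat_adj X)"
  unfolding mat_mult_on_def mat_adj_def by (auto intro!: ext simp: mult.commute)

lemma mat_eq_on_refl [simp]: "mat_eq_on A X X"
  unfolding mat_eq_on_def by auto

lemma mat_eq_on_sym: "mat_eq_on A X Y \<Longrightarrow> mat_eq_on A Y X"
  unfolding mat_eq_on_def by auto

lemma mat_eq_on_trans [trans]: "mat_eq_on A X Y \<Longrightarrow> mat_eq_on A Y Z \<Longrightarrow> mat_eq_on A X Z"
  unfolding mat_eq_on_def by auto

lemma mat_eq_on_trans_eq [trans]:
  "mat_eq_on A X Y \<Longrightarrow> Y = Z \<Longrightarrow> mat_eq_on A X Z"
  "X = Y \<Longrightarrow> mat_eq_on A Y Z \<Longrightarrow> mat_eq_on A X Z"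
  by simp_all

lemma mat_eq_on_mult_on:
  "mat_eq_on A X X' \<Longrightarrow> mat_eq_on A Y Y' \<Longrightarrow> mat_eq_on A (mat_mult_on A X Y) (mat_mult_on A X' Y')"
  unfolding mat_eq_on_def mat_mult_on_def by (auto intro!: sum.cong)

lemma mat_eq_on_one_left: "finite A \<Longrightarrow> mat_eq_on A (mat_mult_on A mat_one X) X"
  unfolding mat_eq_on_def by (simp add: mat_mult_on_one_left)

lemma mat_eq_on_one_right: "finite A \<Longrightarrow> mat_eq_on A (mat_mult_on A X mat_one) X"
  unfolding mat_eq_on_def by (simp add: mat_mult_on_one_right)

lemma unitary_on_iff: "unitary_on A U \<longleftrightarrow> mat_eq_on A (mat_mult_on A (mat_adj U) U) mat_one"
  unfolding unitary_on_def mat_eq_on_def mat_mult_on_def mat_adj_def mat_one_def by simp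

lemma hermitian_on_iff: "hermitian_on A L \<longleftrightarrow> mat_eq_on A (mat_adj L) L"
  unfolding hermitian_on_def mat_eq_on_def mat_adj_def by (metis complex_cnj_cnj)

lemma spectral_decomp_on_iff:
  "finite A \<Longrightarrow> spectral_decomp_on A X U mu \<longleftrightarrow>
     unitary_on A U \<and> mat_eq_on A X (mat_mult_on A (mat_mult_on A U (real_diag mu)) (mat_adj U))"
  unfolding spectral_decomp_on_def mat_eq_on_def
  by (simp add: mat_mult_on_def[of A "mat_mult_on A U _"] mat_mult_on_real_diag mat_adj_def)

lemma cnj_mult_self: "cnj z * z = complex_of_real ((cmod z)\<^sup>2)"
  by (metis complex_norm_square mult.commute of_real_power)

section \<open>The spectral theorem for Hermitian matrices\<close>

lemma eigenvector_exists_on: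
  fixes L :: cmat
  assumes fin: "finite A" and ne: "A \<noteq> {}"
  obtains w e where "\<exists>i\<in>A. w i \<noteq> 0" and "\<forall>i\<in>A. (\<Sum>j\<in>A. L i j * w j) = e * w i"
proof -
  define n where "n = card A"
  have n0: "n > 0" using fin ne unfolding n_def by (simp add: card_gt_0_iff)
  obtain f where bij: "bij_betw f {0..<n} A"
    using ex_bij_betw_nat_finite[OF fin] unfolding n_def by blast
  define M where "M = Matrix.mat n n (\<lambda>(i, j). L (f i) (f j))"
  have Mc: "M \<in> carrier_mat n n" unfolding M_def by simp
  from spectrum_non_empty[OF Mc n0] obtain e v where "eigenvector M v e"
    unfolding spectrum_def eigenvalue_def by blast
  hence vc: "v \<in> carrier_vec n" and v0: "v \<noteq> 0\<^sub>v n" and Mv: "M *\<^sub>v v = e \<cdot>\<^sub>v v"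
    unfolding eigenvector_def using Mc by auto
  define w where "w j = v $ (inv_into {0..<n} f j)" for j
  have wf: "w (f t) = v $ t" if "t < n" for t
    unfolding w_def using bij that by (simp add: bij_betw_def inv_into_f_f)
  have "(\<Sum>j\<in>A. L i j * w j) = e * w i" if i: "i \<in> A" for i
  proof -
    obtain s where s: "s < n" "f s = i" using bij i unfolding bij_betw_def by auto
    have "(\<Sum>j\<in>A. L i j * w j) = (\<Sum>t\<in>{0..<n}. L i (f t) * w (f t))"
      using sum.reindex_bij_betw[OF bij, of "\<lambda>j. L i j * w j"] by simp
    also have "\<dots> = (\<Sum>t\<in>{0..<n}. M $$ (s, t) * v $ t)"
      using s by (intro sum.cong) (auto simp: M_def wf)
    also have "\<dots> = (M *\<^sub>v v) $ s"
      using s Mc vc by (simp add: scalar_prod_def mult.commute)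
    also have "\<dots> = e * v $ s" using Mv s vc by simp
    also have "\<dots> = e * w i" using wf s by metis
    finally show ?thesis .
  qed
  moreover have "\<exists>i\<in>A. w i \<noteq> 0"
  proof (rule ccontr)
    assume "\<not> (\<exists>i\<in>A. w i \<noteq> 0)"
    hence "v $ t = 0" if "t < n" for t using wf bij that unfolding bij_betw_def by auto
    hence "v = 0\<^sub>v n" using vc by (intro eq_vecI) auto
    with v0 show False by simp
  qed
  ultimately show thesis using that by blast
qed

text \<open>The eigenvalue is real because the Rayleigh quotient \<open>w\<^sup>* L w / w\<^sup>* w\<close> of a Hermitian matrix is.\<close>

lemma hermitian_unit_eigenvector:
  fixes L :: cmat
  assumes fin: "finite A" and ne: "A \<noteq> {}" and herm: "hermitian_on A L"
  obtains v and lam :: real where "(\<Sum>i\<in>A. cnj (v i) * v i) = 1"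
    and "\<forall>i\<in>A. (\<Sum>j\<in>A. L i j * v j) = complex_of_real lam * v i"
proof -
  obtain w e where w0: "\<exists>i\<in>A. w i \<noteq> 0" and we: "\<forall>i\<in>A. (\<Sum>j\<in>A. L i j * w j) = e * w i"
    using eigenvector_exists_on[OF fin ne] by metis
  define \<sigma> where "\<sigma> = (\<Sum>i\<in>A. (cmod (w i))\<^sup>2)"
  have sig_pos: "\<sigma> > 0"
  proof -
    from w0 obtain i where i: "i \<in> A" "w i \<noteq> 0" by blast
    have "(cmod (w i))\<^sup>2 \<le> \<sigma>" unfolding \<sigma>_def using i fin by (intro member_le_sum) auto
    moreover have "(cmod (w i))\<^sup>2 > 0" using i by simp
    ultimately show ?thesis by linarith
  qed
  have norm_w: "(\<Sum>i\<in>A. cnj (w i) * w i) = complex_of_real \<sigma>"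
    unfolding \<sigma>_def by (simp add: cnj_mult_self)
  define q where "q = (\<Sum>i\<in>A. cnj (w i) * (\<Sum>j\<in>A. L i j * w j))"
  have "q = e * (\<Sum>i\<in>A. cnj (w i) * w i)"
    unfolding q_def using we by (simp add: sum_distrib_left mult_ac)
  hence q_eq: "q = e * complex_of_real \<sigma>" using norm_w by simp
  have "cnj q = (\<Sum>i\<in>A. \<Sum>j\<in>A. w i * cnj (L i j) * cnj (w j))"
    unfolding q_def by (simp add: sum_distrib_left mult_ac)
  also have "\<dots> = (\<Sum>i\<in>A. \<Sum>j\<in>A. w i * L j i * cnj (w j))"
    using herm unfolding hermitian_on_def by (intro sum.cong refl) (metis complex_cnj_cnj)
  also have "\<dots> = q"
    unfolding q_def by (subst sum.swap) (simp add: sum_distrib_left mult_ac)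
  finally have "q \<in> \<real>" by (simp add: Reals_cnj_iff)
  hence "Im e = 0" using q_eq sig_pos by (simp add: complex_is_Real_iff)
  hence e: "e = complex_of_real (Re e)" by (simp add: complex_eq_iff)
  define v where "v i = w i / complex_of_real (sqrt \<sigma>)" for i
  have "(\<Sum>i\<in>A. cnj (v i) * v i) = (\<Sum>i\<in>A. cnj (w i) * w i) / complex_of_real \<sigma>"
    unfolding v_def sum_divide_distrib using sig_pos
    by (intro sum.cong refl) (simp add: field_simps flip: of_real_mult)
  hence "(\<Sum>i\<in>A. cnj (v i) * v i) = 1" using norm_w sig_pos by simp
  moreover have "(\<Sum>j\<in>A. L i j * v j) = complex_of_real (Re e) * v i" if "i \<in> A" for i
  proof -
    have "(\<Sum>j\<in>A. L i j * v j) = (\<Sum>j\<in>A. L i j * w j) / complex_of_real (sqrt \<sigma>)"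
      unfolding v_def sum_divide_distrib by (simp add: mult_ac)
    thus ?thesis using we e that unfolding v_def by simp
  qed
  ultimately show thesis using that by blast
qed

lemma householder_reflection:
  fixes w :: "nat \<Rightarrow> complex"
  assumes fin: "finite A" and norm_w: "(\<Sum>k\<in>A. cnj (w k) * w k) = complex_of_real s" and s: "s > 0"
  defines "H \<equiv> \<lambda>i j. mat_one i j - complex_of_real (2 / s) * w i * cnj (w j)"
  shows "mat_adj H = H" and "mat_eq_on A (mat_mult_on A H H) mat_one"
proof -
  define t where "t = complex_of_real (2 / s)"
  show "mat_adj H = H"
    unfolding mat_adj_def H_def by (intro ext) (simp add: mat_one_def mult_ac)
  have "mat_mult_on A H H i j = mat_one i j" if i: "i \<in> A" and j: "j \<in> A" for i j
  proof -
    have "H i k * H k j = mat_one i k * mat_one k j - t * w i * (cnj (w k) * mat_one k j)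
        - t * cnj (w j) * (mat_one i k * w k) + t * t * w i * cnj (w j) * (cnj (w k) * w k)" for k
      unfolding H_def t_def by (simp add: algebra_simps)
    hence "mat_mult_on A H H i j = (\<Sum>k\<in>A. mat_one i k * mat_one k j) - t * w i * (\<Sum>k\<in>A. cnj (w k) * mat_one k j)
        - t * cnj (w j) * (\<Sum>k\<in>A. mat_one i k * w k) + t * t * w i * cnj (w j) * (\<Sum>k\<in>A. cnj (w k) * w k)"
      unfolding mat_mult_on_def by (simp only: sum.distrib sum_subtractf flip: sum_distrib_left)
    also have "\<dots> = mat_one i j - 2 * t * w i * cnj (w j) + t * t * complex_of_real s * w i * cnj (w j)"
      using fin i j norm_w by (simp only: sum_mat_one_left sum_mat_one_right) (simp add: algebra_simps)
    also have "t * t * complex_of_real s = 2 * t" unfolding t_def using s by (simp add: field_simps)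
    finally show ?thesis by simp
  qed
  thus "mat_eq_on A (mat_mult_on A H H) mat_one" unfolding mat_eq_on_def by blast
qed

text \<open>The reflection in \<open>e\<^sub>a - c v\<close>, with the phase \<open>|c| = 1\<close> chosen so that \<open>c v\<^sub>a \<le> 0\<close>,
  swaps \<open>e\<^sub>a\<close> and \<open>c v\<close>.\<close>

lemma householder_to_unit_vector:
  fixes v :: "nat \<Rightarrow> complex"
  assumes fin: "finite A" and a: "a \<in> A" and unit: "(\<Sum>i\<in>A. cnj (v i) * v i) = 1"
  obtains H c where "mat_adj H = H" and "mat_eq_on A (mat_mult_on A H H) mat_one"
    and "\<forall>i\<in>A. H i a = c * v i"
proof -
  define c where "c = (if v a = 0 then -1 else - cnj (v a) / complex_of_real (cmod (v a)))"
  have c_va: "c * v a = - complex_of_real (cmod (v a))"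
    using cnj_mult_self[of "v a"] by (auto simp: c_def power2_eq_square field_simps)
  have "cmod c = 1" by (simp add: c_def norm_divide)
  hence c_unit: "cnj c * c = 1" by (simp add: cnj_mult_self)
  define w where "w i = mat_one i a - c * v i" for i
  define s where "s = 2 + 2 * cmod (v a)"
  have s: "s > 0" unfolding s_def by (simp add: add_pos_nonneg)
  have "cnj (w k) * w k = mat_one a k * mat_one k a - mat_one a k * (c * v k)
      - mat_one a k * cnj (c * v k) + cnj c * c * (cnj (v k) * v k)" for k
    unfolding w_def mat_one_def by (cases "k = a") (auto simp: algebra_simps)
  hence "(\<Sum>k\<in>A. cnj (w k) * w k) = (\<Sum>k\<in>A. mat_one a k * mat_one k a)
      - (\<Sum>k\<in>A. mat_one a k * (c * v k)) - (\<Sum>k\<in>A. mat_one a k * cnj (c * v k))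
      + cnj c * c * (\<Sum>k\<in>A. cnj (v k) * v k)"
    by (simp only: sum.distrib sum_subtractf sum_distrib_left)
  also have "\<dots> = 1 - c * v a - cnj (c * v a) + cnj c * c * 1"
    using fin a unit by (simp only: sum_mat_one_left) (simp add: mat_one_def)
  also have "\<dots> = complex_of_real s" using c_va c_unit unfolding s_def by simp
  finally have norm_w: "(\<Sum>k\<in>A. cnj (w k) * w k) = complex_of_real s" .
  define H where "H i j = mat_one i j - complex_of_real (2 / s) * w i * cnj (w j)" for i j
  have "H i a = c * v i" for i
  proof -
    have "cnj (w a) = complex_of_real (s / 2)" using c_va by (simp add: w_def mat_one_def s_def)
    hence "complex_of_real (2 / s) * cnj (w a) = 1" using s by (simp add: field_simps mult.commute flip: of_real_mult)
    hence "H i a = mat_one i a - w i" unfolding H_def by (simp add: mult_ac)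
    thus ?thesis unfolding w_def by simp
  qed
  with householder_reflection[OF fin norm_w s] that show thesis unfolding H_def by blast
qed

lemma spectral_decomp_on_conj:
  assumes fin: "finite A" and dec: "spectral_decomp_on A M W mu" and H: "mat_adj H = H"
    and HH: "mat_eq_on A (mat_mult_on A H H) mat_one"
    and LM: "mat_eq_on A L (mat_mult_on A (mat_mult_on A H M) H)"
  shows "spectral_decomp_on A L (mat_mult_on A H W) mu"
proof -
  from dec fin have W: "mat_eq_on A (mat_mult_on A (mat_adj W) W) mat_one"
    and MW: "mat_eq_on A M (mat_mult_on A (mat_mult_on A W (real_diag mu)) (mat_adj W))"
    by (auto simp: spectral_decomp_on_iff unitary_on_iff)
  have "mat_mult_on A (mat_adj (mat_mult_on A H W)) (mat_mult_on A H W)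
      = mat_mult_on A (mat_adj W) (mat_mult_on A (mat_mult_on A H H) W)"
    by (simp add: mat_adj_mult_on H mat_mult_on_assoc)
  also have "mat_eq_on A \<dots> (mat_mult_on A (mat_adj W) (mat_mult_on A mat_one W))"
    by (intro mat_eq_on_mult_on HH mat_eq_on_refl)
  also have "mat_eq_on A \<dots> (mat_mult_on A (mat_adj W) W)"
    by (intro mat_eq_on_mult_on mat_eq_on_refl mat_eq_on_one_left fin)
  also note W
  finally have unitary: "unitary_on A (mat_mult_on A H W)" unfolding unitary_on_iff .
  note LM
  also have "mat_eq_on A (mat_mult_on A (mat_mult_on A H M) H)
      (mat_mult_on A (mat_mult_on A H (mat_mult_on A (mat_mult_on A W (real_diag mu)) (mat_adj W))) H)"
    by (intro mat_eq_on_mult_on MW mat_eq_on_refl)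
  also have "\<dots> = mat_mult_on A (mat_mult_on A (mat_mult_on A H W) (real_diag mu)) (mat_adj (mat_mult_on A H W))"
    by (simp add: mat_adj_mult_on H mat_mult_on_assoc)
  finally show ?thesis using unitary fin by (simp add: spectral_decomp_on_iff)
qed

text \<open>Conjugating by a reflection that sends \<open>e\<^sub>a\<close> to a unit eigenvector turns \<open>e\<^sub>a\<close> into an
  eigenvector, splitting off a \<open>1 \<times> 1\<close> block.\<close>

lemma householder_deflation:
  fixes L :: cmat
  assumes fin: "finite A" and a: "a \<in> A" and herm: "hermitian_on A L"
  obtains H and lam :: real where "mat_adj H = H" and "mat_eq_on A (mat_mult_on A H H) mat_one"
    and "hermitian_on A (mat_mult_on A (mat_mult_on A H L) H)"
    and "\<forall>i\<in>A. mat_mult_on A (mat_mult_on A H L) H i a = (if i = a then complex_of_real lam else 0)"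
proof -
  obtain v lam where v: "(\<Sum>i\<in>A. cnj (v i) * v i) = 1"
    and ev: "\<forall>i\<in>A. (\<Sum>j\<in>A. L i j * v j) = complex_of_real lam * v i"
    using hermitian_unit_eigenvector[OF fin _ herm] a by blast
  obtain H c where H: "mat_adj H = H" and HH: "mat_eq_on A (mat_mult_on A H H) mat_one"
    and Ha: "\<forall>i\<in>A. H i a = c * v i"
    using householder_to_unit_vector[OF fin a v] by blast
  define M where "M = mat_mult_on A (mat_mult_on A H L) H"
  have LH: "mat_mult_on A L H k a = complex_of_real lam * H k a" if k: "k \<in> A" for k
  proof -
    have "mat_mult_on A L H k a = c * (\<Sum>l\<in>A. L k l * v l)"
      unfolding mat_mult_on_def using Ha by (simp add: sum_distrib_left mult_ac)
    thus ?thesis using ev k Ha by simp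
  qed
  have "M i a = (if i = a then complex_of_real lam else 0)" if i: "i \<in> A" for i
  proof -
    have "M i a = mat_mult_on A H (mat_mult_on A L H) i a"
      unfolding M_def by (simp add: mat_mult_on_assoc)
    also have "\<dots> = (\<Sum>k\<in>A. H i k * (complex_of_real lam * H k a))"
      unfolding mat_mult_on_def[of A H "mat_mult_on A L H"] using LH by (intro sum.cong) auto
    also have "\<dots> = complex_of_real lam * mat_mult_on A H H i a"
      unfolding mat_mult_on_def by (simp add: sum_distrib_left mult_ac)
    also have "\<dots> = complex_of_real lam * mat_one i a" using HH i a unfolding mat_eq_on_def by simp
    finally show ?thesis by (simp add: mat_one_def)
  qed
  moreover have "hermitian_on A M"
  proof -
    have "mat_adj M = mat_mult_on A (mat_mult_on A H (mat_adj L)) H"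
      unfolding M_def by (simp add: mat_adj_mult_on H mat_mult_on_assoc)
    also have "mat_eq_on A \<dots> M"
      using herm unfolding M_def hermitian_on_iff by (intro mat_eq_on_mult_on mat_eq_on_refl)
    finally show ?thesis unfolding hermitian_on_iff .
  qed
  ultimately show thesis using that H HH unfolding M_def by blast
qed

lemma spectral_decomp_on_insert:
  assumes fin: "finite B" and a: "a \<notin> B" and herm: "hermitian_on (insert a B) M"
    and col: "\<forall>i\<in>insert a B. M i a = (if i = a then complex_of_real lam else 0)"
    and dec: "spectral_decomp_on B M U mu"
  shows "spectral_decomp_on (insert a B) M
    (\<lambda>i k. if k = a then mat_one i a else if i = a then 0 else U i k) (mu(a := lam))"
    (is "spectral_decomp_on _ M ?U ?mu")
proof -
  have row: "M a j = (if j = a then complex_of_real lam else 0)" if "j \<in> insert a B" for j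
  proof -
    have "M a j = cnj (M j a)" using herm that unfolding hermitian_on_def by blast
    thus ?thesis using col[rule_format, OF that] by simp
  qed
  have unitary_B: "\<forall>i\<in>B. \<forall>j\<in>B. (\<Sum>k\<in>B. cnj (U k i) * U k j) = (if i = j then 1 else 0)"
    and M_B: "\<forall>i\<in>B. \<forall>j\<in>B. M i j = (\<Sum>k\<in>B. U i k * complex_of_real (mu k) * cnj (U j k))"
    using dec unfolding spectral_decomp_on_def unitary_on_def by blast+
  have "(\<Sum>k\<in>B. cnj (?U k i) * ?U k j)
      = (if i = a \<or> j = a then 0 else (\<Sum>k\<in>B. cnj (U k i) * U k j))" for i j
    using a by (auto intro!: sum.cong sum.neutral simp: mat_one_def)
  moreover have "(\<Sum>k\<in>B. ?U i k * complex_of_real (?mu k) * cnj (?U j k))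
      = (if i = a \<or> j = a then 0 else (\<Sum>k\<in>B. U i k * complex_of_real (mu k) * cnj (U j k)))" for i j
    using a by (auto intro!: sum.cong sum.neutral simp: mat_one_def)
  ultimately show ?thesis unfolding spectral_decomp_on_def unitary_on_def
    using fin a unitary_B M_B col row by (auto simp: mat_one_def)
qed

theorem spectral_decomp_exists:
  fixes L :: cmat
  assumes "finite A" and "hermitian_on A L"
  shows "\<exists>U mu. spectral_decomp_on A L U mu"
  using assms
proof (induction A arbitrary: L rule: finite_induct)
  case empty
  show ?case by (auto simp: spectral_decomp_on_def unitary_on_def)
next
  case (insert a B)
  have fin: "finite (insert a B)" using insert by simp
  obtain H lam where H: "mat_adj H = H" and HH: "mat_eq_on (insert a B) (mat_mult_on (insert a B) H H) mat_one"
    and herm: "hermitian_on (insert a B) (mat_mult_on (insert a B) (mat_mult_on (insert a B) H L) H)"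
    and col: "\<forall>i\<in>insert a B. mat_mult_on (insert a B) (mat_mult_on (insert a B) H L) H i a
                  = (if i = a then complex_of_real lam else 0)"
    using householder_deflation[OF fin _ insert.prems] by blast
  define M where "M = mat_mult_on (insert a B) (mat_mult_on (insert a B) H L) H"
  have "hermitian_on B M" using herm unfolding M_def hermitian_on_def by blast
  then obtain U mu where "spectral_decomp_on B M U mu" using insert.IH by blast
  hence dec: "\<exists>U mu. spectral_decomp_on (insert a B) M U mu"
    using spectral_decomp_on_insert[OF insert.hyps herm[folded M_def] col[folded M_def]] by blast
  have "mat_mult_on (insert a B) (mat_mult_on (insert a B) H M) H
      = mat_mult_on (insert a B) (mat_mult_on (insert a B) H H) (mat_mult_on (insert a B) L (mat_mult_on (insert a B) H H))"
    unfolding M_def by (simp add: mat_mult_on_assoc)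
  also have "mat_eq_on (insert a B) \<dots> (mat_mult_on (insert a B) mat_one (mat_mult_on (insert a B) L mat_one))"
    by (intro mat_eq_on_mult_on HH mat_eq_on_refl)
  also have "mat_eq_on (insert a B) \<dots> L"
    using fin by (metis mat_eq_on_one_left mat_eq_on_one_right mat_eq_on_trans)
  finally have "mat_eq_on (insert a B) L (mat_mult_on (insert a B) (mat_mult_on (insert a B) H M) H)"
    by (rule mat_eq_on_sym)
  with dec show ?case using spectral_decomp_on_conj[OF fin _ H HH] by blast
qed

lemma trace_conj_real_diag:
  assumes fin: "finite A" and U: "unitary_on A U"
  shows "(\<Sum>i\<in>A. mat_mult_on A (mat_mult_on A U (real_diag f)) (mat_adj U) i i) = (\<Sum>k\<in>A. complex_of_real (f k))"
proof -
  have "(\<Sum>i\<in>A. mat_mult_on A (mat_mult_on A U (real_diag f)) (mat_adj U) i i)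
      = (\<Sum>i\<in>A. \<Sum>k\<in>A. U i k * complex_of_real (f k) * cnj (U i k))"
    unfolding mat_mult_on_def[of A "mat_mult_on A U _"] using fin
    by (simp add: mat_mult_on_real_diag mat_adj_def)
  also have "\<dots> = (\<Sum>k\<in>A. \<Sum>i\<in>A. U i k * complex_of_real (f k) * cnj (U i k))"
    by (rule sum.swap)
  also have "\<dots> = (\<Sum>k\<in>A. complex_of_real (f k) * (\<Sum>i\<in>A. cnj (U i k) * U i k))"
    by (simp add: sum_distrib_left mult_ac)
  also have "\<dots> = (\<Sum>k\<in>A. complex_of_real (f k))"
    using U unfolding unitary_on_def by (intro sum.cong) auto
  finally show ?thesis .
qed

lemma spectral_decomp_trace:
  assumes fin: "finite A" and dec: "spectral_decomp_on A X U mu"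
  shows "(\<Sum>i\<in>A. X i i) = (\<Sum>k\<in>A. complex_of_real (mu k))"
proof -
  from dec fin have U: "unitary_on A U"
    and X: "mat_eq_on A X (mat_mult_on A (mat_mult_on A U (real_diag mu)) (mat_adj U))"
    by (auto simp: spectral_decomp_on_iff)
  have "(\<Sum>i\<in>A. X i i) = (\<Sum>i\<in>A. mat_mult_on A (mat_mult_on A U (real_diag mu)) (mat_adj U) i i)"
    using X unfolding mat_eq_on_def by (intro sum.cong) auto
  thus ?thesis using trace_conj_real_diag[OF fin U] by simp
qed

lemma spectral_decomp_trace_square:
  assumes fin: "finite A" and dec: "spectral_decomp_on A X U mu"
  shows "(\<Sum>i\<in>A. \<Sum>j\<in>A. X i j * X j i) = (\<Sum>k\<in>A. complex_of_real ((mu k)\<^sup>2))"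
proof -
  let ?D = "real_diag mu" and ?mult = "mat_mult_on A"
  from dec fin have U: "unitary_on A U" and UU: "mat_eq_on A (?mult (mat_adj U) U) mat_one"
    and X: "mat_eq_on A X (?mult (?mult U ?D) (mat_adj U))"
    by (auto simp: spectral_decomp_on_iff unitary_on_iff)
  have DD: "mat_eq_on A (?mult ?D ?D) (real_diag (\<lambda>k. (mu k)\<^sup>2))"
    unfolding mat_eq_on_def using fin
    by (auto simp: mat_mult_on_real_diag) (auto simp: real_diag_def power2_eq_square)
  have "mat_eq_on A (?mult X X) (?mult (?mult (?mult U ?D) (mat_adj U)) (?mult (?mult U ?D) (mat_adj U)))"
    by (intro mat_eq_on_mult_on X)
  also have "\<dots> = ?mult U (?mult ?D (?mult (?mult (mat_adj U) U) (?mult ?D (mat_adj U))))"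
    by (simp add: mat_mult_on_assoc)
  also have "mat_eq_on A \<dots> (?mult U (?mult ?D (?mult mat_one (?mult ?D (mat_adj U)))))"
    using UU by (intro mat_eq_on_mult_on mat_eq_on_refl)
  also have "mat_eq_on A \<dots> (?mult U (?mult ?D (?mult ?D (mat_adj U))))"
    using fin by (intro mat_eq_on_mult_on mat_eq_on_refl mat_eq_on_one_left)
  also have "\<dots> = ?mult (?mult U (?mult ?D ?D)) (mat_adj U)"
    by (simp add: mat_mult_on_assoc)
  also have "mat_eq_on A \<dots> (?mult (?mult U (real_diag (\<lambda>k. (mu k)\<^sup>2))) (mat_adj U))"
    using DD by (intro mat_eq_on_mult_on mat_eq_on_refl)
  finally have XX: "mat_eq_on A (?mult X X) (?mult (?mult U (real_diag (\<lambda>k. (mu k)\<^sup>2))) (mat_adj U))" .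
  have "(\<Sum>i\<in>A. \<Sum>j\<in>A. X i j * X j i) = (\<Sum>i\<in>A. ?mult X X i i)"
    unfolding mat_mult_on_def by simp
  also have "\<dots> = (\<Sum>i\<in>A. ?mult (?mult U (real_diag (\<lambda>k. (mu k)\<^sup>2))) (mat_adj U) i i)"
    using XX unfolding mat_eq_on_def by (intro sum.cong) auto
  also have "\<dots> = (\<Sum>k\<in>A. complex_of_real ((mu k)\<^sup>2))" by (rule trace_conj_real_diag[OF fin U])
  finally show ?thesis .
qed

lemma spectral_decomp_eigenvalue:
  assumes fin: "finite A" and dec: "spectral_decomp_on A X U mu" and k: "k \<in> A"
  shows "(\<Sum>i\<in>A. \<Sum>j\<in>A. cnj (U i k) * X i j * U j k) = complex_of_real (mu k)"
proof -
  let ?D = "real_diag mu" and ?mult = "mat_mult_on A"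
  from dec fin have UU: "mat_eq_on A (?mult (mat_adj U) U) mat_one"
    and X: "mat_eq_on A X (?mult (?mult U ?D) (mat_adj U))"
    by (auto simp: spectral_decomp_on_iff unitary_on_iff)
  have "mat_eq_on A (?mult (?mult (mat_adj U) X) U) (?mult (?mult (mat_adj U) (?mult (?mult U ?D) (mat_adj U))) U)"
    using X by (intro mat_eq_on_mult_on mat_eq_on_refl)
  also have "\<dots> = ?mult (?mult (?mult (mat_adj U) U) ?D) (?mult (mat_adj U) U)"
    by (simp add: mat_mult_on_assoc)
  also have "mat_eq_on A \<dots> (?mult (?mult mat_one ?D) mat_one)"
    using UU by (intro mat_eq_on_mult_on mat_eq_on_refl)
  also have "mat_eq_on A \<dots> ?D"
    using mat_eq_on_one_left[OF fin] mat_eq_on_one_right[OF fin] by (metis mat_eq_on_trans)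
  finally have "?mult (?mult (mat_adj U) X) U k k = ?D k k" using k unfolding mat_eq_on_def by blast
  hence "(\<Sum>j\<in>A. (\<Sum>i\<in>A. cnj (U i k) * X i j) * U j k) = complex_of_real (mu k)"
    unfolding mat_mult_on_def mat_adj_def real_diag_def by simp
  moreover have "(\<Sum>i\<in>A. \<Sum>j\<in>A. cnj (U i k) * X i j * U j k) = (\<Sum>j\<in>A. (\<Sum>i\<in>A. cnj (U i k) * X i j) * U j k)"
    by (subst sum.swap) (simp add: sum_distrib_right)
  ultimately show ?thesis by simp
qed

text \<open>The decomposition is the one chosen by \<open>SOME\<close> in \<open>mat_fun_on\<close>; the choice is not
  vacuous by \<open>spectral_decomp_exists\<close>.\<close>

lemma tr_fun_eq_sum_eigenvalues:
  fixes X :: cmat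
  assumes fin: "finite A" and herm: "hermitian_on A X"
  obtains U mu where "spectral_decomp_on A X U mu" and "tr_fun phi X A = (\<Sum>k\<in>A. phi (mu k))"
proof -
  define P where "P F \<longleftrightarrow> (\<exists>U mu. spectral_decomp_on A X U mu \<and>
     (\<forall>i\<in>A. \<forall>j\<in>A. F i j = (\<Sum>k\<in>A. U i k * complex_of_real (phi (mu k)) * cnj (U j k))))" for F
  obtain U0 mu0 where "spectral_decomp_on A X U0 mu0" using spectral_decomp_exists[OF fin herm] by blast
  hence "P (\<lambda>i j. \<Sum>k\<in>A. U0 i k * complex_of_real (phi (mu0 k)) * cnj (U0 j k))" unfolding P_def by blast
  hence "P (mat_fun_on phi A X)" unfolding mat_fun_on_def P_def[symmetric] by (rule someI[where P = P])
  then obtain U mu where dec: "spectral_decomp_on A X U mu"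
    and F: "\<forall>i\<in>A. \<forall>j\<in>A. mat_fun_on phi A X i j = (\<Sum>k\<in>A. U i k * complex_of_real (phi (mu k)) * cnj (U j k))"
    unfolding P_def by blast
  have U: "unitary_on A U" using dec unfolding spectral_decomp_on_def by blast
  have "(\<Sum>i\<in>A. mat_fun_on phi A X i i) = (\<Sum>i\<in>A. mat_mult_on A (mat_mult_on A U (real_diag (\<lambda>k. phi (mu k)))) (mat_adj U) i i)"
    using F fin by (intro sum.cong refl) (simp add: mat_mult_on_def[of A "mat_mult_on A U _"] mat_mult_on_real_diag mat_adj_def)
  also have "\<dots> = (\<Sum>k\<in>A. complex_of_real (phi (mu k)))" by (rule trace_conj_real_diag[OF fin U])
  finally have "tr_fun phi X A = (\<Sum>k\<in>A. phi (mu k))" unfolding tr_fun_def by simp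
  with dec that show thesis by blast
qed

lemma psd_hermitian_on_subset:
  assumes psd: "psd_hermitian_on Y L" and AY: "A \<subseteq> Y" and fin: "finite Y"
  shows "psd_hermitian_on A L"
  unfolding psd_hermitian_on_def
proof (intro conjI allI)
  show "hermitian_on A L" using psd AY unfolding psd_hermitian_on_def hermitian_on_def by blast
next
  fix x :: "nat \<Rightarrow> complex"
  define x' where "x' i = (if i \<in> A then x i else 0)" for i
  have "0 \<le> Re (\<Sum>i\<in>Y. \<Sum>j\<in>Y. cnj (x' i) * L i j * x' j)"
    using psd unfolding psd_hermitian_on_def by blast
  also have "(\<Sum>i\<in>Y. \<Sum>j\<in>Y. cnj (x' i) * L i j * x' j) = (\<Sum>i\<in>A. \<Sum>j\<in>Y. cnj (x' i) * L i j * x' j)"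
    using AY fin by (intro sum.mono_neutral_right) (auto simp: x'_def)
  also have "\<dots> = (\<Sum>i\<in>A. \<Sum>j\<in>A. cnj (x' i) * L i j * x' j)"
    using AY fin by (intro sum.cong refl sum.mono_neutral_right) (auto simp: x'_def)
  also have "\<dots> = (\<Sum>i\<in>A. \<Sum>j\<in>A. cnj (x i) * L i j * x j)"
    by (intro sum.cong refl) (simp add: x'_def)
  finally show "0 \<le> Re (\<Sum>i\<in>A. \<Sum>j\<in>A. cnj (x i) * L i j * x j)" .
qed

lemma psd_eigenvalue_nonneg:
  assumes fin: "finite A" and psd: "psd_hermitian_on A L"
    and dec: "spectral_decomp_on A L U mu" and k: "k \<in> A"
  shows "mu k \<ge> 0"
proof -
  have "0 \<le> Re (\<Sum>i\<in>A. \<Sum>j\<in>A. cnj (U i k) * L i j * U j k)"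
    using psd unfolding psd_hermitian_on_def by (auto dest: spec[of _ "\<lambda>i. U i k"])
  thus ?thesis using spectral_decomp_eigenvalue[OF fin dec k] by simp
qed

lemma tr_fun_singleton:
  assumes "hermitian_on {i} L"
  shows "tr_fun phi L {i} = phi (Re (L i i))"
proof -
  obtain U mu where dec: "spectral_decomp_on {i} L U mu" and tr: "tr_fun phi L {i} = phi (mu i)"
    using tr_fun_eq_sum_eigenvalues[of "{i}" L phi] assms by auto
  have "L i i = complex_of_real (mu i)" using spectral_decomp_trace[OF _ dec] by simp
  thus ?thesis using tr by simp
qed

text \<open>A singular Hermitian \<open>2 \<times> 2\<close> matrix has eigenvalues \<open>0\<close> and its trace \<open>\<tau>\<close>: they sum to \<open>\<tau>\<close>,
  and their squares sum to \<open>tr X\<^sup>2 = \<tau>\<^sup>2 - 2 det X = \<tau>\<^sup>2\<close>.\<close>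

lemma tr_fun_singular_pair:
  assumes ij: "i \<noteq> j" and herm: "hermitian_on {i, j} L" and det: "L i i * L j j = L i j * L j i"
  shows "tr_fun phi L {i, j} = phi (Re (L i i + L j j)) + phi 0"
proof -
  obtain U mu where dec: "spectral_decomp_on {i, j} L U mu"
    and tr: "tr_fun phi L {i, j} = phi (mu i) + phi (mu j)"
    using tr_fun_eq_sum_eigenvalues[of "{i, j}" L phi] herm ij by auto
  have sum: "L i i + L j j = complex_of_real (mu i + mu j)"
    using spectral_decomp_trace[OF _ dec] ij by simp
  have "L i i * L i i + L i j * L j i + (L j i * L i j + L j j * L j j)
      = complex_of_real ((mu i)\<^sup>2 + (mu j)\<^sup>2)"
    using spectral_decomp_trace_square[OF _ dec] ij by simp
  also have "L i i * L i i + L i j * L j i + (L j i * L i j + L j j * L j j) = (L i i + L j j)\<^sup>2"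
    using det by (simp add: power2_eq_square algebra_simps)
  finally have "(mu i + mu j)\<^sup>2 = (mu i)\<^sup>2 + (mu j)\<^sup>2"
    unfolding sum by (simp flip: of_real_power of_real_add)
  hence "mu i = 0 \<or> mu j = 0" by (simp add: power2_sum)
  moreover have "Re (L i i + L j j) = mu i + mu j" using sum by simp
  ultimately show ?thesis using tr by auto
qed

lemma tr_fun_affine:
  assumes aff: "\<forall>x\<ge>0. phi x = b * x + c" and fin: "finite A" and psd: "psd_hermitian_on A L"
  shows "tr_fun phi L A = b * (\<Sum>i\<in>A. Re (L i i)) + c * real (card A)"
proof -
  have "hermitian_on A L" using psd unfolding psd_hermitian_on_def by blast
  then obtain U mu where dec: "spectral_decomp_on A L U mu" and tr: "tr_fun phi L A = (\<Sum>k\<in>A. phi (mu k))"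
    using tr_fun_eq_sum_eigenvalues[OF fin] by blast
  have "(\<Sum>k\<in>A. phi (mu k)) = (\<Sum>k\<in>A. b * mu k + c)"
    using aff psd_eigenvalue_nonneg[OF fin psd dec] by (intro sum.cong) auto
  also have "\<dots> = b * (\<Sum>k\<in>A. mu k) + c * real (card A)"
    by (simp add: sum.distrib sum_distrib_left)
  also have "(\<Sum>k\<in>A. mu k) = (\<Sum>i\<in>A. Re (L i i))"
    using arg_cong[OF spectral_decomp_trace[OF fin dec], of Re] by simp
  finally show ?thesis using tr by simp
qed

section \<open>A Cauchy-type functional equation\<close>

lemma additive_on_nonneg_rat_homogeneous:
  fixes g :: "real \<Rightarrow> real"
  assumes add: "\<And>x y. x \<ge> 0 \<Longrightarrow> y \<ge> 0 \<Longrightarrow> g (x + y) = g x + g y" and n: "n > 0"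
  shows "g (real m / real n) = real m / real n * g 1"
proof -
  have g0: "g 0 = 0" using add[of 0 0] by simp
  have mult: "g (real k * x) = real k * g x" if "x \<ge> 0" for k x
  proof (induction k)
    case 0 show ?case using g0 by simp
  next
    case (Suc k)
    have "g (real (Suc k) * x) = g (real k * x + x)" by (simp add: algebra_simps)
    also have "\<dots> = g (real k * x) + g x" using that by (intro add) auto
    finally show ?case using Suc by (simp add: algebra_simps)
  qed
  have "g 1 = real n * g (1 / real n)" using mult[of "1 / real n" n] n by simp
  moreover have "g (real m / real n) = real m * g (1 / real n)" using mult[of "1 / real n" m] by simp
  ultimately show ?thesis using n by (simp add: field_simps)
qed

lemma floor_fraction_tendsto:
  fixes x :: real
  assumes x: "x \<ge> 0"
  shows "(\<lambda>k. real (nat \<lfloor>real (Suc k) * x\<rfloor>) / real (Suc k)) \<longlonglongrightarrow> x"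
proof (rule tendsto_sandwich)
  have fl: "real (nat \<lfloor>real (Suc k) * x\<rfloor>) = of_int \<lfloor>real (Suc k) * x\<rfloor>" for k
    using x by simp
  show "\<forall>\<^sub>F k in sequentially. real (nat \<lfloor>real (Suc k) * x\<rfloor>) / real (Suc k) \<le> x"
    unfolding fl by (intro always_eventually allI) (simp add: divide_le_eq mult.commute)
  have "x - inverse (real (Suc k)) \<le> real (nat \<lfloor>real (Suc k) * x\<rfloor>) / real (Suc k)" for k
  proof -
    have "real (Suc k) * x - 1 \<le> of_int \<lfloor>real (Suc k) * x\<rfloor>" by linarith
    hence "(real (Suc k) * x - 1) / real (Suc k) \<le> of_int \<lfloor>real (Suc k) * x\<rfloor> / real (Suc k)"
      by (intro divide_right_mono) auto
    thus ?thesis unfolding fl by (simp add: field_simps)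
  qed
  thus "\<forall>\<^sub>F k in sequentially. x - inverse (real (Suc k)) \<le> real (nat \<lfloor>real (Suc k) * x\<rfloor>) / real (Suc k)"
    by (intro always_eventually allI)
  show "(\<lambda>k. x - inverse (real (Suc k))) \<longlonglongrightarrow> x"
    using tendsto_diff[OF tendsto_const LIMSEQ_inverse_real_of_nat, of x] by simp
qed (rule tendsto_const)

text \<open>An additive function on \<open>[0, \<infinity>)\<close> is linear on the nonnegative rationals, and by
  continuity everywhere on \<open>[0, \<infinity>)\<close>.\<close>

lemma continuous_cauchy_equation_affine:
  fixes phi :: "real \<Rightarrow> real"
  assumes cont: "continuous_on {0..} phi"
    and eq: "\<And>x y. x \<ge> 0 \<Longrightarrow> y \<ge> 0 \<Longrightarrow> phi x + phi y = phi (x + y) + phi 0"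
  shows "\<exists>b c. \<forall>x\<ge>0. phi x = b * x + c"
proof -
  define g where "g x = phi x - phi 0" for x
  have add: "g (x + y) = g x + g y" if "x \<ge> 0" "y \<ge> 0" for x y
    using eq[OF that] unfolding g_def by simp
  have "phi x = g 1 * x + phi 0" if x: "x \<ge> 0" for x
  proof -
    define r where "r k = real (nat \<lfloor>real (Suc k) * x\<rfloor>) / real (Suc k)" for k
    have r: "r \<longlonglongrightarrow> x" unfolding r_def using floor_fraction_tendsto[OF x] .
    have "(\<lambda>k. phi (r k)) \<longlonglongrightarrow> phi x"
      using continuous_on_tendsto_compose[OF cont r] x by (simp add: r_def o_def)
    moreover have "phi (r k) = g 1 * r k + phi 0" for k
      using additive_on_nonneg_rat_homogeneous[OF add, of "Suc k" "nat \<lfloor>real (Suc k) * x\<rfloor>"]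
      unfolding r_def g_def by (simp add: mult.commute)
    hence "(\<lambda>k. phi (r k)) \<longlonglongrightarrow> g 1 * x + phi 0"
      using tendsto_add[OF tendsto_mult[OF tendsto_const r] tendsto_const, of "g 1" "phi 0"] by simp
    ultimately show ?thesis by (rule LIMSEQ_unique)
  qed
  thus ?thesis by blast
qed

section \<open>Log-modularity of the DKPP\<close>

lemma Z_phi_pos: "Z_phi phi N L > 0"
  unfolding Z_phi_def by (intro sum_pos) auto

lemma log_modular_dkpp_iff: "log_modular_on Y (dkpp phi N L) \<longleftrightarrow> modular_on Y (tr_fun phi L)"
proof -
  have "ln (dkpp phi N L S) = tr_fun phi L S - ln (Z_phi phi N L)" for S
    unfolding dkpp_def using Z_phi_pos[of phi N L] by (simp add: ln_div)
  moreover have "dkpp phi N L S > 0" for S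
    unfolding dkpp_def using Z_phi_pos[of phi N L] by simp
  ultimately show ?thesis unfolding log_modular_on_def modular_on_def by simp
qed

lemma modular_on_tr_fun_affine:
  assumes aff: "\<forall>x\<ge>0. phi x = b * x + c" and fin: "finite Y" and psd: "psd_hermitian_on Y L"
  shows "modular_on Y (tr_fun phi L)"
  unfolding modular_on_def
proof (intro allI impI)
  fix S T assume S: "S \<subseteq> Y" and T: "T \<subseteq> Y"
  have tr: "tr_fun phi L A = b * (\<Sum>i\<in>A. Re (L i i)) + c * real (card A)" if "A \<subseteq> Y" for A
    using tr_fun_affine[OF aff finite_subset[OF that fin] psd_hermitian_on_subset[OF psd that fin]] .
  have fin_ST: "finite S" "finite T" using S T fin finite_subset by auto
  have "b * ((\<Sum>i\<in>S. Re (L i i)) + (\<Sum>i\<in>T. Re (L i i)))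
      = b * ((\<Sum>i\<in>S \<union> T. Re (L i i)) + (\<Sum>i\<in>S \<inter> T. Re (L i i)))"
    using sum.union_inter[OF fin_ST, of "\<lambda>i. Re (L i i)"] by simp
  moreover have "c * (real (card S) + real (card T)) = c * (real (card (S \<union> T)) + real (card (S \<inter> T)))"
    using card_Un_Int[OF fin_ST] by simp
  moreover have "S \<union> T \<subseteq> Y" "S \<inter> T \<subseteq> Y" using S T by auto
  ultimately show "tr_fun phi L S + tr_fun phi L T = tr_fun phi L (S \<union> T) + tr_fun phi L (S \<inter> T)"
    using S T by (simp only: tr distrib_left)
qed

lemma rank_one_psd_hermitian_on:
  fixes r :: "nat \<Rightarrow> real"
  shows "psd_hermitian_on A (\<lambda>i j. complex_of_real (r i * r j))"
  unfolding psd_hermitian_on_def hermitian_on_def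
proof (intro conjI allI ballI)
  fix i j show "complex_of_real (r i * r j) = cnj (complex_of_real (r j * r i))" by (simp add: mult.commute)
next
  fix z :: "nat \<Rightarrow> complex"
  define s where "s = (\<Sum>j\<in>A. complex_of_real (r j) * z j)"
  have "cnj s * s = (\<Sum>i\<in>A. \<Sum>j\<in>A. cnj (z i) * complex_of_real (r i * r j) * z j)"
    unfolding s_def cnj_sum sum_product by (intro sum.cong refl) (simp add: mult_ac)
  moreover have "Re (cnj s * s) \<ge> 0" by (simp add: cnj_mult_self)
  ultimately show "0 \<le> Re (\<Sum>i\<in>A. \<Sum>j\<in>A. cnj (z i) * complex_of_real (r i * r j) * z j)" by simp
qed

lemma cauchy_equation_of_modular_tr_fun:
  fixes phi :: "real \<Rightarrow> real"
  assumes N: "N \<ge> 2" and H: "\<forall>L. psd_hermitian_on {1..N} L \<longrightarrow> modular_on {1..N} (tr_fun phi L)"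
    and x: "x \<ge> 0" and y: "y \<ge> 0"
  shows "phi x + phi y = phi (x + y) + phi 0"
proof -
  define r :: "nat \<Rightarrow> real" where "r i = (if i = 1 then sqrt x else if i = 2 then sqrt y else 0)" for i
  define L where "L i j = complex_of_real (r i * r j)" for i j
  have herm: "hermitian_on A L" for A unfolding L_def hermitian_on_def by (simp add: mult.commute)
  have L11: "L 1 1 = complex_of_real x" and L22: "L 2 2 = complex_of_real y"
    unfolding L_def r_def using x y by simp_all
  have "modular_on {1..N} (tr_fun phi L)"
    using H rank_one_psd_hermitian_on unfolding L_def by blast
  moreover have "{1::nat} \<subseteq> {1..N}" "{2::nat} \<subseteq> {1..N}" using N by auto
  ultimately have "tr_fun phi L {1} + tr_fun phi L {2} = tr_fun phi L ({1} \<union> {2}) + tr_fun phi L ({1} \<inter> {2})"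
    unfolding modular_on_def by blast
  moreover have "{1::nat} \<union> {2} = {1, 2}" "{1::nat} \<inter> {2} = {}" by auto
  ultimately have "tr_fun phi L {1} + tr_fun phi L {2} = tr_fun phi L {1, 2} + tr_fun phi L {}"
    by (simp only:)
  moreover have "tr_fun phi L {1, 2} = phi (x + y) + phi 0"
  proof -
    have "L 1 1 * L 2 2 = L 1 2 * L 2 1" unfolding L_def by (simp add: mult_ac)
    thus ?thesis using tr_fun_singular_pair[OF _ herm] L11 L22 by simp
  qed
  moreover have "tr_fun phi L {1} = phi x" "tr_fun phi L {2} = phi y"
    using tr_fun_singleton[OF herm] L11 L22 by simp_all
  moreover have "tr_fun phi L {} = 0" by (simp add: tr_fun_def)
  ultimately show ?thesis by linarith
qed

theorem mainTheorem4:
  fixes N :: nat and phi :: "real \<Rightarrow> real"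
  assumes "N \<ge> 2"
    and "continuous_on {0..} phi"
  shows "(\<forall>L. psd_hermitian_on {1..N} L \<longrightarrow> log_modular_on {1..N} (dkpp phi N L))
         \<longleftrightarrow> (\<exists>b c. \<forall>x\<ge>0. phi x = b * x + c)"
  unfolding log_modular_dkpp_iff
proof
  assume "\<forall>L. psd_hermitian_on {1..N} L \<longrightarrow> modular_on {1..N} (tr_fun phi L)"
  from cauchy_equation_of_modular_tr_fun[OF assms(1) this]
  show "\<exists>b c. \<forall>x\<ge>0. phi x = b * x + c"
    by (rule continuous_cauchy_equation_affine[OF assms(2)])
next
  assume "\<exists>b c. \<forall>x\<ge>0. phi x = b * x + c"
  then show "\<forall>L. psd_hermitian_on {1..N} L \<longrightarrow> modular_on {1..N} (tr_fun phi L)"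
    using modular_on_tr_fun_affine[of phi _ _ "{1..N}"] by blast
qed

end
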